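(* Let $X$ be a robust $X$-set parameter, let $G$ and $G'$ be graphs, and let $\tilde\varphi:\mathfrak{X}(G)\to\mathfrak{X}(G')$ be a graph isomorphism. Suppose $X(K_1)=0$ or $G$ and $G'$ have no isolated vertices. Then $R'=V(G')\setminus\tilde\varphi(V(G))$ is $X$-irrelevant in $G'$, and $\varphi=\nu_{R'}\circ\tilde\varphi$ is a graph isomorphism $\mathfrak{X}(G)\to\mathfrak{X}(G')$ with $\varphi(V(G))=V(G')$ and $|\varphi(S)|=|S|$ for every $X$-set $S$ of $G$.
   Context: All graphs are finite, simple, undirected, with nonempty vertex set. A super $X$-set parameter $X$ assigns to each graph $G$ a family of subsets of $V(G)$, called the $X$-sets of $G$, such that: every graph isomorphism maps $X$-sets to $X$-sets; every graph has at least one $X$-set; and (Superset) if $S$ is an $X$-set of $G$ and $S\subseteq S'\subseteq V(G)$, then $S'$ is an $X$-set of $G$. $X(G)$ is the minimum cardinality of an $X$-set. A robust $X$-set parameter is a super $X$-set parameter that additionally satisfies: ($(n-1)$-set) if $G$ is connected of order $n\ge2$, every set of $n-1$ vertices is an $X$-set; (Component consistency) if $G_1,\dots,G_k$ are the connected components of $G$, then $S\subseteq V(G)$ is an $X$-set of $G$ iff $S\cap V(G_i)$ is an $X$-set of $G_i$ for all $i$. The $X$-TAR graph $\mathfrak{X}(G)$ has as vertices the $X$-sets of $G$, with $S_1S_2$ an edge iff $|S_1\ominus S_2|=1$. A vertex is $X$-irrelevant if it lies in no minimal (w.r.t. inclusion) $X$-set; a set is $X$-irrelevant if all its vertices are.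 For $R\subseteq V(G')$, $\nu_R(S)=S\ominus R$ (symmetric difference). *)

theory Defs
  imports Main
begin

text \<open>A graph is a pair (vertex set, edge set), edges being 2-element vertex sets.
  Input graphs live on vertex type nat (every finite graph is isomorphic to one on nat).\<close>

type_synonym 'a graph = "'a set \<times> 'a set set"

definition verts :: "'a graph \<Rightarrow> 'a set" where "verts G = fst G"
definition edges :: "'a graph \<Rightarrow> 'a set set" where "edges G = snd G"

definition wf_graph :: "'a graph \<Rightarrow> bool" where
  "wf_graph G \<longleftrightarrow> finite (verts G) \<and> verts G \<noteq> {} \<and>
     (\<forall>e\<in>edges G. e \<subseteq> verts G \<and> card e = 2)"

definition graph_iso :: "('a \<Rightarrow> 'b) \<Rightarrow> 'a graph \<Rightarrow> 'b graph \<Rightarrow> bool" where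
  "graph_iso f G H \<longleftrightarrow> bij_betw f (verts G) (verts H) \<and>
     (\<forall>x\<in>verts G. \<forall>y\<in>verts G. {x,y} \<in> edges G \<longleftrightarrow> {f x, f y} \<in> edges H)"

definition adj_rel :: "'a graph \<Rightarrow> ('a \<times> 'a) set" where
  "adj_rel G = {(x,y). x \<in> verts G \<and> y \<in> verts G \<and> {x,y} \<in> edges G}"

definition connected_graph :: "'a graph \<Rightarrow> bool" where
  "connected_graph G \<longleftrightarrow> (\<forall>x\<in>verts G. \<forall>y\<in>verts G. (x,y) \<in> (adj_rel G)\<^sup>*)"

definition component_sets :: "'a graph \<Rightarrow> 'a set set" where
  "component_sets G = {{y \<in> verts G. (x,y) \<in> (adj_rel G)\<^sup>*} | x. x \<in> verts G}"

definition induced :: "'a graph \<Rightarrow> 'a set \<Rightarrow> 'a graph" where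
  "induced G C = (C, {e \<in> edges G. e \<subseteq> C})"

definition no_isolated :: "'a graph \<Rightarrow> bool" where
  "no_isolated G \<longleftrightarrow> (\<forall>v\<in>verts G. \<exists>e\<in>edges G. v \<in> e)"

type_synonym param = "nat graph \<Rightarrow> nat set set"

definition super_param :: "param \<Rightarrow> bool" where
  "super_param X \<longleftrightarrow>
     (\<forall>G. wf_graph G \<longrightarrow> (\<forall>S\<in>X G. S \<subseteq> verts G)) \<and>
     (\<forall>G H f. wf_graph G \<and> wf_graph H \<and> graph_iso f G H \<longrightarrow> (\<forall>S\<in>X G. f ` S \<in> X H)) \<and>
     (\<forall>G. wf_graph G \<longrightarrow> X G \<noteq> {}) \<and>
     (\<forall>G S S'. wf_graph G \<and> S \<in> X G \<and> S \<subseteq> S' \<and> S' \<subseteq> verts G \<longrightarrow> S' \<in> X G)"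

definition robust_param :: "param \<Rightarrow> bool" where
  "robust_param X \<longleftrightarrow> super_param X \<and>
     (\<forall>G. wf_graph G \<and> connected_graph G \<and> card (verts G) \<ge> 2 \<longrightarrow>
        (\<forall>v\<in>verts G. verts G - {v} \<in> X G)) \<and>
     (\<forall>G S. wf_graph G \<and> S \<subseteq> verts G \<longrightarrow>
        (S \<in> X G \<longleftrightarrow> (\<forall>C\<in>component_sets G. S \<inter> C \<in> X (induced G C))))"

definition Xnum :: "param \<Rightarrow> nat graph \<Rightarrow> nat" where
  "Xnum X G = Min (card ` X G)"

definition K1 :: "nat graph" where "K1 = ({0}, {})"

definition symdiff :: "'a set \<Rightarrow> 'a set \<Rightarrow> 'a set" where
  "symdiff A B = (A - B) \<union> (B - A)"

definition TAR :: "param \<Rightarrow> nat graph \<Rightarrow> nat set graph" where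
  "TAR X G = (X G, {{S1, S2} | S1 S2. S1 \<in> X G \<and> S2 \<in> X G \<and> card (symdiff S1 S2) = 1})"

definition minimal_Xset :: "param \<Rightarrow> nat graph \<Rightarrow> nat set \<Rightarrow> bool" where
  "minimal_Xset X G S \<longleftrightarrow> S \<in> X G \<and> (\<forall>T\<in>X G. T \<subseteq> S \<longrightarrow> T = S)"

definition X_irrelevant :: "param \<Rightarrow> nat graph \<Rightarrow> nat set \<Rightarrow> bool" where
  "X_irrelevant X G R \<longleftrightarrow> (\<forall>v\<in>R. \<not> (\<exists>S. minimal_Xset X G S \<and> v \<in> S))"

definition nu :: "nat set \<Rightarrow> nat set \<Rightarrow> nat set" where
  "nu R S = symdiff S R"

end

theory Submission
  imports Defs
begin

text \<open>
  The X-sets of G form a family of subsets of V = V(G) closed upwards in V that, under the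
  hypothesis on K1 or isolated vertices, contains V and every V - {u}; adjacency in the TAR graph
  is symmetric difference of size one. Translate the isomorphism to g S = \<phi>(S) \<ominus> \<phi>(V): then g is
  injective, preserves adjacency and maps V to the empty set, so each g (V - {u}) is a singleton
  {\<pi> u}. Since a set adjacent to both P - {p} and P - {q} is P or P - {p, q}, induction on |V - S|
  gives g S = \<pi>(V - S). Using V' and V' - {v} as X-sets of G' shows that \<pi> is a bijection V \<rightarrow> V',
  and unwinding gives \<nu>_R(\<phi>(S)) = \<pi>(S) for R = V' - \<phi>(V). So \<nu>_R \<circ> \<phi> is induced by a vertex
  bijection, which yields all claims; in particular any vertex of R can be deleted from an
  X-set of G', so no minimal X-set contains it.
\<close>

lemma symdiff_iff: "x \<in> symdiff A B \<longleftrightarrow> (x \<in> A \<longleftrightarrow> x \<notin> B)"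
  by (auto simp: symdiff_def)

lemma symdiff_commute: "symdiff A B = symdiff B A"
  by (auto simp: symdiff_def)

lemma symdiff_symdiff_cancel: "symdiff (symdiff P A) (symdiff Q A) = symdiff P Q"
  by (auto simp: symdiff_def)

lemma symdiff_symdiff_self: "symdiff (symdiff A B) B = A"
  by (auto simp: symdiff_def)

lemma symdiff_insert_self: "x \<notin> S \<Longrightarrow> symdiff S (insert x S) = {x}"
  by (auto simp: symdiff_def)

lemma image_symdiff:
  assumes "inj_on f V" "S \<subseteq> V" "T \<subseteq> V"
  shows "f ` symdiff S T = symdiff (f ` S) (f ` T)"
proof -
  have "f ` (S - T) = f ` S - f ` T" "f ` (T - S) = f ` T - f ` S"
    using inj_on_image_set_diff[OF assms(1)] assms(2,3) by auto
  then show ?thesis by (simp add: symdiff_def image_Un)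
qed

lemma symdiff_one_from_two_punctures:
  assumes "card (symdiff Z (P - {p})) = 1" "card (symdiff Z (P - {q})) = 1"
    and "p \<in> P" "q \<in> P" "p \<noteq> q"
  shows "Z = P \<or> Z = P - {p, q}"
proof -
  obtain a b where a: "\<And>x. x \<in> symdiff Z (P - {p}) \<longleftrightarrow> x = a"
    and b: "\<And>x. x \<in> symdiff Z (P - {q}) \<longleftrightarrow> x = b"
    using assms(1,2) by (auto simp: card_1_singleton_iff)
  show ?thesis
  proof (cases "p \<in> Z")
    case True
    then have "a = p" using a[of p] by (simp add: symdiff_iff)
    then have "Z = P" using a \<open>p \<in> P\<close> by (intro set_eqI) (metis Diff_iff insertI1 singletonD symdiff_iff)
    then show ?thesis ..
  next
    case False
    then have "b = p" using b[of p] assms(3,5) by (simp add: symdiff_iff)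
    then have "q \<notin> Z" using b[of q] assms(5) by (simp add: symdiff_iff)
    then have "a = q" using a[of q] assms(4,5) by (simp add: symdiff_iff)
    then have "Z = P - {p, q}" using a \<open>p \<notin> Z\<close> \<open>q \<notin> Z\<close>
      by (intro set_eqI) (metis Diff_iff insertCI insertE singletonD symdiff_iff)
    then show ?thesis ..
  qed
qed

section \<open>Families containing all coatoms\<close>

locale coatom_family =
  fixes V :: "'a set" and F :: "'a set set"
  assumes finite_V: "finite V"
    and subset_V: "S \<in> F \<Longrightarrow> S \<subseteq> V"
    and top: "V \<in> F"
    and coatom: "u \<in> V \<Longrightarrow> V - {u} \<in> F"
    and up_closed: "S \<in> F \<Longrightarrow> S \<subseteq> T \<Longrightarrow> T \<subseteq> V \<Longrightarrow> T \<in> F"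
begin

lemma finite_F: "finite F"
  by (rule finite_subset[of F "Pow V"]) (use subset_V finite_V in auto)

end

locale dist_one_map = coatom_family V F for V :: "'a set" and F +
  fixes g :: "'a set \<Rightarrow> 'b set"
  assumes inj_g: "inj_on g F"
    and dist_one_g: "\<And>S T. S \<in> F \<Longrightarrow> T \<in> F \<Longrightarrow> card (symdiff S T) = 1 \<Longrightarrow>
                       card (symdiff (g S) (g T)) = 1"
    and g_top: "g V = {}"
begin

definition relabel :: "'a \<Rightarrow> 'b" where
  "relabel u = the_elem (g (V - {u}))"

lemma g_coatom: "u \<in> V \<Longrightarrow> g (V - {u}) = {relabel u}"
proof -
  assume "u \<in> V"
  then have "card (symdiff (g (V - {u})) (g V)) = 1"
    using dist_one_g[OF coatom top] symdiff_insert_self[of u "V - {u}"] by (simp add: insert_absorb)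
  then show ?thesis using g_top by (auto simp: relabel_def symdiff_def card_1_singleton_iff)
qed

lemma inj_on_relabel: "inj_on relabel V"
proof (rule inj_onI)
  fix u w assume "u \<in> V" "w \<in> V" "relabel u = relabel w"
  then have "V - {u} = V - {w}" using g_coatom inj_onD[OF inj_g] coatom by metis
  then show "u = w" using \<open>u \<in> V\<close> by blast
qed

lemma g_eq_image_complement_step:
  assumes S: "S \<in> F" and uw: "u \<in> V - S" "w \<in> V - S" "u \<noteq> w"
    and IH: "\<And>T. S \<subset> T \<Longrightarrow> T \<subseteq> V \<Longrightarrow> g T = relabel ` (V - T)"
  shows "g S = relabel ` (V - S)"
proof -
  define P where "P = relabel ` (V - S)"
  have S_V: "S \<subseteq> V" using subset_V[OF S] .
  have g_above: "g (S \<union> U) = P - relabel ` U" if "U \<subseteq> V - S" "U \<noteq> {}" for U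
  proof -
    have "S \<subset> S \<union> U" "S \<union> U \<subseteq> V" using that S_V by auto
    then have "g (S \<union> U) = relabel ` (V - (S \<union> U))" by (rule IH)
    also have "V - (S \<union> U) = (V - S) - U" by blast
    also have "relabel ` ((V - S) - U) = P - relabel ` U"
      using inj_on_image_set_diff[OF inj_on_relabel, of "V - S" U] that unfolding P_def by auto
    finally show ?thesis .
  qed
  have "card (symdiff (g S) (P - {relabel v})) = 1" if "v \<in> V - S" for v
  proof -
    have "insert v S \<in> F" by (rule up_closed[OF S]) (use that S_V in auto)
    then have "card (symdiff (g S) (g (S \<union> {v}))) = 1"
      using dist_one_g[OF S] symdiff_insert_self[of v S] that by simp
    then show ?thesis using g_above[of "{v}"] that by simp
  qed
  moreover have "relabel u \<in> P" "relabel w \<in> P" "relabel u \<noteq> relabel w"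
    using uw inj_onD[OF inj_on_relabel] by (auto simp: P_def)
  ultimately have "g S = P \<or> g S = P - {relabel u, relabel w}"
    using uw by (intro symdiff_one_from_two_punctures) auto
  moreover have "g S \<noteq> g (S \<union> {u, w})"
  proof
    assume "g S = g (S \<union> {u, w})"
    moreover have "S \<union> {u, w} \<in> F" by (rule up_closed[OF S]) (use uw S_V in auto)
    ultimately have "S = S \<union> {u, w}" using inj_onD[OF inj_g _ S] by metis
    then show False using uw by blast
  qed
  ultimately show ?thesis using g_above[of "{u, w}"] uw by (auto simp: P_def)
qed

lemma g_eq_image_complement: "S \<in> F \<Longrightarrow> g S = relabel ` (V - S)"
proof (induction "card (V - S)" arbitrary: S rule: less_induct)
  case less
  have S_V: "S \<subseteq> V" using subset_V[OF less.prems] .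
  consider "V - S = {}" | u where "V - S = {u}" | u w where "u \<in> V - S" "w \<in> V - S" "u \<noteq> w"
    by blast
  then show ?case
  proof cases
    case 1
    then show ?thesis using S_V g_top by (simp add: Diff_eq_empty_iff subset_antisym)
  next
    case (2 u)
    then have "S = V - {u}" "u \<in> V" using S_V by auto
    then show ?thesis using g_coatom 2 by simp
  next
    case (3 u w)
    show ?thesis
    proof (rule g_eq_image_complement_step[OF less.prems 3])
      fix T assume T: "S \<subset> T" "T \<subseteq> V"
      show "g T = relabel ` (V - T)"
      proof (rule less.hyps)
        show "card (V - T) < card (V - S)"
          using T S_V finite_V by (intro psubset_card_mono) auto
        show "T \<in> F" using up_closed[OF less.prems] T by blast
      qed
    qed
  qed
qed

end

locale coatom_family_iso = src: coatom_family V F + tgt: coatom_family V' F'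
  for V :: "'a set" and F and V' :: "'b set" and F' +
  fixes f :: "'a set \<Rightarrow> 'b set"
  assumes bij: "bij_betw f F F'"
    and dist_one: "\<And>S T. S \<in> F \<Longrightarrow> T \<in> F \<Longrightarrow> card (symdiff S T) = 1 \<Longrightarrow>
                     card (symdiff (f S) (f T)) = 1"
begin

definition normalised :: "'a set \<Rightarrow> 'b set" where
  "normalised S = symdiff (f S) (f V)"

text \<open>This is \<nu>_R \<circ> f for R = V' - f V.\<close>

definition flip :: "'a set \<Rightarrow> 'b set" where
  "flip S = symdiff (f S) (V' - f V)"

lemma f_mem: "S \<in> F \<Longrightarrow> f S \<in> F'"
  using bij by (auto simp: bij_betw_def)

lemma f_subset: "S \<in> F \<Longrightarrow> f S \<subseteq> V'"
  by (rule tgt.subset_V[OF f_mem])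

sublocale normalised: dist_one_map V F normalised
proof
  show "inj_on normalised F"
  proof (rule inj_onI)
    fix S T assume "S \<in> F" "T \<in> F" "normalised S = normalised T"
    then have "f S = f T" unfolding normalised_def by (metis symdiff_symdiff_self)
    then show "S = T" using bij \<open>S \<in> F\<close> \<open>T \<in> F\<close> by (auto simp: bij_betw_def inj_on_def)
  qed
  show "card (symdiff (normalised S) (normalised T)) = 1"
    if "S \<in> F" "T \<in> F" "card (symdiff S T) = 1" for S T
    using dist_one[OF that] by (simp add: normalised_def symdiff_symdiff_cancel)
  show "normalised V = {}" by (simp add: normalised_def symdiff_def)
qed

abbreviation relabel :: "'a \<Rightarrow> 'b" where
  "relabel \<equiv> normalised.relabel"

lemma f_eq_symdiff_image_complement: "S \<in> F \<Longrightarrow> f S = symdiff (relabel ` (V - S)) (f V)"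
  using normalised.g_eq_image_complement by (metis normalised_def symdiff_symdiff_self)

lemma image_relabel: "relabel ` V = V'"
proof
  show "relabel ` V \<subseteq> V'"
  proof
    fix v assume "v \<in> relabel ` V"
    then obtain u where "u \<in> V" "v = relabel u" by blast
    then have "v \<in> normalised (V - {u})" using normalised.g_coatom by simp
    then show "v \<in> V'"
      using f_subset[OF src.coatom[OF \<open>u \<in> V\<close>]] f_subset[OF src.top]
      by (auto simp: normalised_def symdiff_def)
  qed
  show "V' \<subseteq> relabel ` V"
  proof
    fix v assume "v \<in> V'"
    define T where "T = (if v \<in> f V then V' - {v} else V')"
    have "T \<in> F'" using tgt.top tgt.coatom[OF \<open>v \<in> V'\<close>] by (simp add: T_def)
    then obtain S where "S \<in> F" "f S = T" using bij by (auto simp: bij_betw_def)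
    moreover have "v \<in> symdiff T (f V)" using \<open>v \<in> V'\<close> by (simp add: T_def symdiff_iff)
    ultimately show "v \<in> relabel ` V"
      using f_eq_symdiff_image_complement by (auto simp: symdiff_def)
  qed
qed

lemma flip_eq_image: "S \<in> F \<Longrightarrow> flip S = relabel ` S"
proof -
  assume S: "S \<in> F"
  have "relabel ` (V - S) = V' - relabel ` S"
    using inj_on_image_set_diff[OF normalised.inj_on_relabel, of V S] src.subset_V[OF S] image_relabel
    by auto
  moreover have "relabel ` S \<subseteq> V'" using image_relabel src.subset_V[OF S] by blast
  ultimately show ?thesis
    using f_eq_symdiff_image_complement[OF S] f_subset[OF src.top] by (auto simp: flip_def symdiff_def)
qed

lemma image_relabel_mem: "S \<in> F \<Longrightarrow> relabel ` S \<in> F'"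
proof -
  assume S: "S \<in> F"
  define R where "R = V' - f V"
  \<comment> \<open>Adding the preimage of R to S yields an X-set whose image f S' lies below relabel ` S.\<close>
  define S' where "S' = S \<union> (V \<inter> relabel -` R)"
  have "S' \<in> F"
    by (rule src.up_closed[OF S]) (use src.subset_V[OF S] in \<open>auto simp: S'_def\<close>)
  have "relabel ` S' = relabel ` S \<union> R"
    using image_relabel by (auto simp: S'_def R_def)
  then have "f S' = relabel ` S - R"
    using flip_eq_image[OF \<open>S' \<in> F\<close>] symdiff_symdiff_self[of "f S'" R]
    by (auto simp: flip_def R_def symdiff_def)
  then have "f S' \<subseteq> relabel ` S" by blast
  moreover have "relabel ` S \<subseteq> V'" using image_relabel src.subset_V[OF S] by blast
  ultimately show ?thesis by (rule tgt.up_closed[OF f_mem[OF \<open>S' \<in> F\<close>]])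
qed

lemma bij_betw_flip: "bij_betw flip F F'"
proof -
  have "\<Union>F \<subseteq> V" using src.subset_V by blast
  then have inj: "inj_on ((`) relabel) F"
    by (intro inj_on_image inj_on_subset[OF normalised.inj_on_relabel])
  have "(`) relabel ` F = F'"
  proof (rule card_subset_eq[OF tgt.finite_F])
    show "(`) relabel ` F \<subseteq> F'" using image_relabel_mem by blast
    show "card ((`) relabel ` F) = card F'"
      using card_image[OF inj] bij_betw_same_card[OF bij] by simp
  qed
  with inj have "bij_betw ((`) relabel) F F'" by (simp add: bij_betw_def)
  then show ?thesis using bij_betw_cong[of F flip "(`) relabel"] flip_eq_image by simp
qed

lemma card_symdiff_flip:
  assumes "S \<in> F" "T \<in> F"
  shows "card (symdiff (flip S) (flip T)) = card (symdiff S T)"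
proof -
  note inj = normalised.inj_on_relabel
  have "symdiff S T \<subseteq> V" using src.subset_V assms by (auto simp: symdiff_def)
  then show ?thesis
    using flip_eq_image assms image_symdiff[OF inj src.subset_V[OF assms(1)] src.subset_V[OF assms(2)]]
      card_image[OF inj_on_subset[OF inj]] by metis
qed

lemma card_flip: "S \<in> F \<Longrightarrow> card (flip S) = card S"
  using flip_eq_image card_image[OF inj_on_subset[OF normalised.inj_on_relabel src.subset_V]] by simp

lemma flip_top: "flip V = V'"
  using f_subset[OF src.top] by (auto simp: flip_def symdiff_def)

lemma remove_outside_image_mem:
  assumes "v \<in> V' - f V" "T \<in> F'" "v \<in> T"
  shows "T - {v} \<in> F'"
proof -
  obtain S where S: "S \<in> F" "f S = T" using bij \<open>T \<in> F'\<close> by (auto simp: bij_betw_def)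
  have T_eq: "T = symdiff (relabel ` S) (V' - f V)"
    using flip_eq_image[OF S(1)] symdiff_symdiff_self[of "f S" "V' - f V"] S(2) by (simp add: flip_def)
  obtain u where u: "u \<in> V" "v = relabel u" using image_relabel assms(1) by blast
  have "u \<notin> S" using T_eq assms u by (auto simp: symdiff_def)
  have "insert u S \<in> F"
    by (rule src.up_closed[OF S(1)]) (use src.subset_V[OF S(1)] u in auto)
  moreover have "f (insert u S) = T - {v}"
    using flip_eq_image[OF calculation] symdiff_symdiff_self[of "f (insert u S)" "V' - f V"]
      T_eq assms(1) u \<open>u \<notin> S\<close>
    by (auto simp: flip_def symdiff_def)
  ultimately show ?thesis using f_mem by metis
qed

end

section \<open>X-sets of graphs\<close>

lemma super_param_Xset_subset_verts:
  assumes "super_param X" "wf_graph G" "S \<in> X G"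
  shows "S \<subseteq> verts G"
proof -
  have "\<forall>G. wf_graph G \<longrightarrow> (\<forall>S\<in>X G. S \<subseteq> verts G)"
    using assms(1) unfolding super_param_def by (elim conjE)
  with assms(2,3) show ?thesis by blast
qed

lemma super_param_Xset_superset:
  assumes "super_param X" "wf_graph G" "S \<in> X G" "S \<subseteq> T" "T \<subseteq> verts G"
  shows "T \<in> X G"
proof -
  have "\<forall>G S T. wf_graph G \<and> S \<in> X G \<and> S \<subseteq> T \<and> T \<subseteq> verts G \<longrightarrow> T \<in> X G"
    using assms(1) unfolding super_param_def by (elim conjE)
  with assms(2-5) show ?thesis by blast
qed

lemma super_param_iso_image:
  assumes "super_param X" "wf_graph G" "wf_graph H" "graph_iso f G H" "S \<in> X G"
  shows "f ` S \<in> X H"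
proof -
  have "\<forall>G H f. wf_graph G \<and> wf_graph H \<and> graph_iso f G H \<longrightarrow> (\<forall>S\<in>X G. f ` S \<in> X H)"
    using assms(1) unfolding super_param_def by (elim conjE)
  with assms(2-5) show ?thesis by blast
qed

lemma super_param_Xsets_nonempty: "super_param X \<Longrightarrow> wf_graph G \<Longrightarrow> X G \<noteq> {}"
  unfolding super_param_def by blast

lemma super_param_verts_Xset:
  assumes "super_param X" "wf_graph G"
  shows "verts G \<in> X G"
proof -
  obtain S where "S \<in> X G" using super_param_Xsets_nonempty[OF assms] by blast
  then show ?thesis
    using super_param_Xset_superset[OF assms] super_param_Xset_subset_verts[OF assms] by blast
qed

lemma robust_param_super_param: "robust_param X \<Longrightarrow> super_param X"
  unfolding robust_param_def by (elim conjE) blast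

lemma robust_param_connected_minus_vertex:
  "robust_param X \<Longrightarrow> wf_graph G \<Longrightarrow> connected_graph G \<Longrightarrow> 2 \<le> card (verts G) \<Longrightarrow>
    v \<in> verts G \<Longrightarrow>
    verts G - {v} \<in> X G"
  unfolding robust_param_def by (elim conjE) blast

lemma robust_param_XsetI_components:
  "robust_param X \<Longrightarrow> wf_graph G \<Longrightarrow> S \<subseteq> verts G \<Longrightarrow>
    (\<And>C. C \<in> component_sets G \<Longrightarrow> S \<inter> C \<in> X (induced G C)) \<Longrightarrow> S \<in> X G"
  unfolding robust_param_def by (elim conjE) blast

lemma wf_graph_K1: "wf_graph K1"
  by (simp add: wf_graph_def K1_def verts_def edges_def)

lemma empty_Xset_K1:
  assumes "super_param X" "Xnum X K1 = 0"
  shows "{} \<in> X K1"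
proof -
  have "finite (X K1)"
    by (rule finite_subset[of _ "Pow {0}"])
      (use super_param_Xset_subset_verts[OF assms(1) wf_graph_K1] in \<open>auto simp: K1_def verts_def\<close>)
  moreover have "X K1 \<noteq> {}" using super_param_Xsets_nonempty[OF assms(1) wf_graph_K1] .
  ultimately have "Xnum X K1 \<in> card ` X K1" unfolding Xnum_def by (intro Min_in) auto
  then obtain S where "S \<in> X K1" "card S = 0" using assms(2) by auto
  moreover have "finite S"
    using super_param_Xset_subset_verts[OF assms(1) wf_graph_K1 \<open>S \<in> X K1\<close>]
    by (auto simp: K1_def verts_def intro: finite_subset)
  ultimately show ?thesis by simp
qed

lemma empty_Xset_one_vertex:
  assumes "super_param X" "Xnum X K1 = 0" "wf_graph H" "verts H = {u}"
  shows "{} \<in> X H"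
proof -
  have "edges H = {}"
  proof -
    have "e \<subseteq> {u} \<and> card e = 2 \<longrightarrow> False" for e
      using card_mono[of "{u}" e] by auto
    then show ?thesis using assms(3,4) by (auto simp: wf_graph_def)
  qed
  then have "graph_iso (\<lambda>_. u) K1 H"
    using assms(4) by (auto simp: graph_iso_def K1_def verts_def edges_def bij_betw_def)
  then show ?thesis
    using super_param_iso_image[OF assms(1) wf_graph_K1 assms(3) _ empty_Xset_K1[OF assms(1,2)]] by simp
qed

lemma component_setsE:
  assumes "C \<in> component_sets G"
  obtains x where "x \<in> verts G" "C = {y \<in> verts G. (x, y) \<in> (adj_rel G)\<^sup>*}"
  using assms by (auto simp: component_sets_def)

lemma rtrancl_adj_rel_induced:
  assumes "(x, y) \<in> (adj_rel G)\<^sup>*"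
    and closed: "\<And>z. z \<in> verts G \<Longrightarrow> (x, z) \<in> (adj_rel G)\<^sup>* \<Longrightarrow> z \<in> C"
  shows "(x, y) \<in> (adj_rel (induced G C))\<^sup>*"
  using assms(1)
proof (induction rule: rtrancl_induct)
  case base
  then show ?case by simp
next
  case (step y z)
  then have "y \<in> C" "z \<in> C" "(y, z) \<in> adj_rel G"
    using closed by (auto simp: adj_rel_def intro: rtrancl_into_rtrancl)
  then have "(y, z) \<in> adj_rel (induced G C)"
    by (simp add: adj_rel_def induced_def verts_def edges_def)
  with step.IH show ?case by (rule rtrancl_into_rtrancl)
qed

lemma
  assumes "wf_graph G" "C \<in> component_sets G"
  shows wf_graph_induced_component: "wf_graph (induced G C)"
    and connected_induced_component: "connected_graph (induced G C)"
proof -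
  obtain x where x: "x \<in> verts G" and C: "C = {y \<in> verts G. (x, y) \<in> (adj_rel G)\<^sup>*}"
    using assms(2) by (rule component_setsE)
  have "C \<subseteq> verts G" "x \<in> C" using x C by auto
  then show "wf_graph (induced G C)"
    using assms(1) finite_subset by (auto simp: wf_graph_def induced_def verts_def edges_def)
  have path: "(x, y) \<in> (adj_rel (induced G C))\<^sup>*" if "y \<in> C" for y
    using that C by (auto intro: rtrancl_adj_rel_induced)
  have "sym (adj_rel (induced G C))"
    by (auto simp: sym_def adj_rel_def insert_commute)
  then have sym: "sym ((adj_rel (induced G C))\<^sup>*)" by (rule sym_rtrancl)
  show "connected_graph (induced G C)"
    unfolding connected_graph_def
  proof (intro ballI)
    fix a b assume "a \<in> verts (induced G C)" "b \<in> verts (induced G C)"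
    then have "a \<in> C" "b \<in> C" by (simp_all add: induced_def verts_def)
    then show "(a, b) \<in> (adj_rel (induced G C))\<^sup>*"
      using symD[OF sym path] path rtrancl_trans by metis
  qed
qed

lemma two_le_card_component:
  assumes "wf_graph G" "no_isolated G" "C \<in> component_sets G"
  shows "2 \<le> card C"
proof -
  obtain x where x: "x \<in> verts G" and C: "C = {y \<in> verts G. (x, y) \<in> (adj_rel G)\<^sup>*}"
    using assms(3) by (rule component_setsE)
  obtain e where e: "e \<in> edges G" "x \<in> e" using assms(2) x by (auto simp: no_isolated_def)
  then have "e \<subseteq> verts G" "card e = 2" using assms(1) by (auto simp: wf_graph_def)
  then obtain w where w: "e = {x, w}" "w \<noteq> x" using e(2) by (auto simp: card_2_iff)
  then have "w \<in> verts G" "(x, w) \<in> adj_rel G"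
    using \<open>e \<subseteq> verts G\<close> e(1) x by (auto simp: adj_rel_def)
  then have "{x, w} \<subseteq> C" using x C by auto
  moreover have "finite C" using assms(1) C by (auto simp: wf_graph_def)
  ultimately have "card {x, w} \<le> card C" by (rule card_mono[rotated])
  then show ?thesis using w(2) by simp
qed

lemma robust_param_minus_vertex:
  assumes rp: "robust_param X" and wf: "wf_graph G"
    and hyp: "Xnum X K1 = 0 \<or> no_isolated G" and u: "u \<in> verts G"
  shows "verts G - {u} \<in> X G"
proof (rule robust_param_XsetI_components[OF rp wf])
  have sp: "super_param X" using rp by (rule robust_param_super_param)
  fix C assume C: "C \<in> component_sets G"
  have wfC: "wf_graph (induced G C)" and verts_C: "verts (induced G C) = C"
    using wf_graph_induced_component[OF wf C] by (simp_all add: induced_def verts_def)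
  have "C \<subseteq> verts G" using C by (auto elim: component_setsE)
  consider "u \<notin> C" | "u \<in> C" "2 \<le> card C" | "u \<in> C" "card C < 2" by linarith
  then show "(verts G - {u}) \<inter> C \<in> X (induced G C)"
  proof cases
    case 1
    then have "(verts G - {u}) \<inter> C = C" using \<open>C \<subseteq> verts G\<close> by blast
    then show ?thesis using super_param_verts_Xset[OF sp wfC] verts_C by simp
  next
    case 2
    moreover have "(verts G - {u}) \<inter> C = C - {u}" using \<open>C \<subseteq> verts G\<close> by blast
    ultimately show ?thesis
      using robust_param_connected_minus_vertex[OF rp wfC connected_induced_component[OF wf C]]
        verts_C by simp
  next
    case 3
    have "\<not> no_isolated G"
    proof
      assume "no_isolated G"
      then have "2 \<le> card C" by (rule two_le_card_component[OF wf _ C])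
      with 3 show False by simp
    qed
    then have "Xnum X K1 = 0" using hyp by blast
    moreover have "C = {u}"
    proof -
      have "finite C" using wfC verts_C by (simp add: wf_graph_def)
      with 3 have "card C = 1" by (auto simp: less_2_cases_iff)
      then obtain z where "C = {z}" by (auto simp: card_1_singleton_iff)
      with 3 show ?thesis by simp
    qed
    ultimately show ?thesis using empty_Xset_one_vertex[OF sp _ wfC] verts_C by simp
  qed
qed auto

lemma coatom_family_Xsets:
  assumes "robust_param X" "wf_graph G" "Xnum X K1 = 0 \<or> no_isolated G"
  shows "coatom_family (verts G) (X G)"
proof (rule coatom_family.intro)
  have sp: "super_param X" using assms(1) by (rule robust_param_super_param)
  show "finite (verts G)" using assms(2) by (simp add: wf_graph_def)
  show "S \<subseteq> verts G" if "S \<in> X G" for S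
    using super_param_Xset_subset_verts[OF sp assms(2) that] .
  show "verts G \<in> X G" by (rule super_param_verts_Xset[OF sp assms(2)])
  show "verts G - {u} \<in> X G" if "u \<in> verts G" for u
    by (rule robust_param_minus_vertex[OF assms that])
  show "T \<in> X G" if "S \<in> X G" "S \<subseteq> T" "T \<subseteq> verts G" for S T
    by (rule super_param_Xset_superset[OF sp assms(2) that])
qed

section \<open>The X-TAR graph\<close>

lemma verts_TAR: "verts (TAR X G) = X G"
  by (simp add: TAR_def verts_def)

lemma edge_TAR_iff:
  assumes "S \<in> X G" "T \<in> X G"
  shows "{S, T} \<in> edges (TAR X G) \<longleftrightarrow> card (symdiff S T) = 1"
proof
  assume "{S, T} \<in> edges (TAR X G)"
  then obtain S1 S2 where "{S, T} = {S1, S2}" "card (symdiff S1 S2) = 1"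
    by (auto simp: TAR_def edges_def)
  then show "card (symdiff S T) = 1" by (metis doubleton_eq_iff symdiff_commute)
next
  assume "card (symdiff S T) = 1"
  then show "{S, T} \<in> edges (TAR X G)" using assms by (auto simp: TAR_def edges_def)
qed

lemma graph_iso_TAR_iff:
  "graph_iso f (TAR X G) (TAR X H) \<longleftrightarrow>
     bij_betw f (X G) (X H) \<and>
     (\<forall>S\<in>X G. \<forall>T\<in>X G. card (symdiff S T) = 1 \<longleftrightarrow> card (symdiff (f S) (f T)) = 1)"
proof -
  have "{S, T} \<in> edges (TAR X G) \<longleftrightarrow> {f S, f T} \<in> edges (TAR X H) \<longleftrightarrow>
      card (symdiff S T) = 1 \<longleftrightarrow> card (symdiff (f S) (f T)) = 1"
    if "bij_betw f (X G) (X H)" "S \<in> X G" "T \<in> X G" for S T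
    using that edge_TAR_iff bij_betwE by metis
  then show ?thesis unfolding graph_iso_def verts_TAR by blast
qed

lemma X_irrelevantI:
  assumes "\<And>v T. v \<in> R \<Longrightarrow> T \<in> X G \<Longrightarrow> v \<in> T \<Longrightarrow> T - {v} \<in> X G"
  shows "X_irrelevant X G R"
  unfolding X_irrelevant_def minimal_Xset_def using assms by blast

theorem theorem2p24:
  fixes X :: param and G G' :: "nat graph" and phit :: "nat set \<Rightarrow> nat set"
  assumes "robust_param X"
    and "wf_graph G" and "wf_graph G'"
    and "graph_iso phit (TAR X G) (TAR X G')"
    and "Xnum X K1 = 0 \<or> (no_isolated G \<and> no_isolated G')"
  shows "X_irrelevant X G' (verts G' - phit (verts G)) \<and>
         graph_iso (nu (verts G' - phit (verts G)) \<circ> phit) (TAR X G) (TAR X G') \<and>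
         (nu (verts G' - phit (verts G)) \<circ> phit) (verts G) = verts G' \<and>
         (\<forall>S\<in>X G. card ((nu (verts G' - phit (verts G)) \<circ> phit) S) = card S)"
proof -
  from assms(4) have bij: "bij_betw phit (X G) (X G')"
    and dist_one: "\<forall>S\<in>X G. \<forall>T\<in>X G.
      card (symdiff S T) = 1 \<longleftrightarrow> card (symdiff (phit S) (phit T)) = 1"
    by (simp_all add: graph_iso_TAR_iff)
  have "Xnum X K1 = 0 \<or> no_isolated G" "Xnum X K1 = 0 \<or> no_isolated G'" using assms(5) by blast+
  with assms(1-3) bij dist_one interpret coatom_family_iso "verts G" "X G" "verts G'" "X G'" phit
    by (simp add: coatom_family_iso_def coatom_family_iso_axioms_def coatom_family_Xsets)
  have "nu (verts G' - phit (verts G)) \<circ> phit = flip"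
    by (simp add: fun_eq_iff nu_def flip_def)
  moreover have "X_irrelevant X G' (verts G' - phit (verts G))"
    by (rule X_irrelevantI) (rule remove_outside_image_mem)
  moreover have "graph_iso flip (TAR X G) (TAR X G')"
    using bij_betw_flip card_symdiff_flip by (simp add: graph_iso_TAR_iff)
  ultimately show ?thesis using flip_top card_flip by simp
qed

end
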